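(* Let $a,b,c,d\in\mathbb C$ with $a\notin\mathbb Z$ and $d\notin\{0,-1,-2,\dots\}$. Then, as an identity of formal power series in $x,y$, $${}_1F_1(a;d;x)\,F(b,c;1-a;y)=\mathrm H_{11}(a,b,c;d;x,-y)+\sum_{k=1}^\infty\sum_{l=1}^k\frac{(-1)^{k-l}(k-1)!}{(l-1)!\,l!\,(k-l)!}\,\frac{(b)_k(c)_k}{(1-a)_k(1-a)_{k-l}(d)_l}\,x^ly^k\,\mathrm H_{11}(a-k+l,b+k,c+k;d+l;x,-y).$$
   Context: Pochhammer symbol: $(\lambda)_k=\Gamma(\lambda+k)/\Gamma(\lambda)$ for every integer $k$ (possibly negative) whenever defined; $(\lambda)_0=1$. $F(a,b;c;x)=\sum_{k\ge0}\frac{(a)_k(b)_k}{(c)_k k!}x^k$, ${}_1F_1(a;c;x)=\sum_{k\ge0}\frac{(a)_k}{(c)_k k!}x^k$. Confluent Horn function $\mathrm H_{11}(a,b,c;d;x,y)=\sum_{p,q\ge0}\frac{(a)_{p-q}(b)_q(c)_q}{(d)_p\,p!\,q!}x^py^q$. All functions are regarded as formal power series in $x,y$; the infinite double sum converges in the formal (degree) topology. *)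

theory Defs
  imports Complex_Main
begin

text \<open>Formal power series in two variables x, y, represented by their coefficient
  arrays: F p q is the coefficient of x^p y^q.\<close>
type_synonym bser = "nat \<Rightarrow> nat \<Rightarrow> complex"

definition bmul :: "bser \<Rightarrow> bser \<Rightarrow> bser" where
  "bmul F G = (\<lambda>p q. \<Sum>i\<le>p. \<Sum>j\<le>q. F i j * G (p - i) (q - j))"

definition badd :: "bser \<Rightarrow> bser \<Rightarrow> bser" where
  "badd F G = (\<lambda>p q. F p q + G p q)"

definition bsmult :: "complex \<Rightarrow> bser \<Rightarrow> bser" where
  "bsmult c F = (\<lambda>p q. c * F p q)"

definition bmono :: "nat \<Rightarrow> nat \<Rightarrow> bser" where
  "bmono l k = (\<lambda>p q. if p = l \<and> q = k then 1 else 0)"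

text \<open>Formal (coefficientwise) sum of a family of series: each coefficient is the
  sum of the (finitely many, when the family is summable in the formal topology)
  nonzero contributions.\<close>
definition bsum :: "('i \<Rightarrow> bser) \<Rightarrow> 'i set \<Rightarrow> bser" where
  "bsum F I = (\<lambda>p q. \<Sum>i\<in>{i\<in>I. F i p q \<noteq> 0}. F i p q)"

definition bsummable :: "('i \<Rightarrow> bser) \<Rightarrow> 'i set \<Rightarrow> bool" where
  "bsummable F I \<longleftrightarrow> (\<forall>p q. finite {i\<in>I. F i p q \<noteq> 0})"

text \<open>Pochhammer symbol with integer index:
  (a)_k = Gamma(a+k)/Gamma(a); for negative k this is 1/((a+k)(a+k+1)...(a-1)).\<close>
definition poch_int :: "complex \<Rightarrow> int \<Rightarrow> complex" where
  "poch_int a k = (if 0 \<le> k then pochhammer a (nat k)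
                   else 1 / pochhammer (a + of_int k) (nat (- k)))"

definition hyp1F1 :: "complex \<Rightarrow> complex \<Rightarrow> bser" where
  "hyp1F1 a c = (\<lambda>p q. if q = 0 then pochhammer a p / (pochhammer c p * fact p) else 0)"

definition hyp2F1y :: "complex \<Rightarrow> complex \<Rightarrow> complex \<Rightarrow> bser" where
  "hyp2F1y a b c = (\<lambda>p q. if p = 0 then pochhammer a q * pochhammer b q / (pochhammer c q * fact q) else 0)"

definition H11 :: "complex \<Rightarrow> complex \<Rightarrow> complex \<Rightarrow> complex \<Rightarrow> bser" where
  "H11 a b c d = (\<lambda>p q. poch_int a (int p - int q) * pochhammer b q * pochhammer c q
                          / (pochhammer d p * fact p * fact q))"

definition bnegy :: "bser \<Rightarrow> bser" where
  "bnegy F = (\<lambda>p q. (-1) ^ q * F p q)"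

end

theory Submission
  imports Defs "HOL-Analysis.Gamma_Function" "HOL-Computational_Algebra.Formal_Power_Series"
begin

text \<open>Splitting (b)_q = (b)_k (b+k)_{q-k}, likewise for c and d,
  and using the reflection (a-m)_{m+n} = (-1)^m (1-a)_m (a)_n, the (k,l)-term contributes
  (a)_{p-q} (b)_q (c)_q / ((d)_p p!) times (-1)^{q-k} / ((1-a)_k (q-k)!) times C(k-1,l-1) C(p,l).
  Vandermonde sums the binomials over l to C(p+k-1,k). The H11 term is the summand k = 0, and the
  resulting sum over k is a Chu-Vandermonde sum with value (a+p-q)_q / ((1-a)_q q!), which turns
  (a)_{p-q} into (a)_p. Pochhammer symbols with integer index are handled as Gamma quotients,
  which is where a \<notin> \<int> is needed.\<close>

lemma bmul_bmono_coeff: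
  "bmul (bmono l k) G p q = (if l \<le> p \<and> k \<le> q then G (p - l) (q - k) else 0)"
proof -
  have "bmul (bmono l k) G p q
      = (\<Sum>i\<le>p. \<Sum>j\<le>q. if i = l then (if j = k then G (p - i) (q - j) else 0) else 0)"
    unfolding bmul_def bmono_def by (intro sum.cong refl) auto
  also have "\<dots> = (\<Sum>i\<le>p. if i = l then (if k \<le> q then G (p - i) (q - k) else 0) else 0)"
    by (intro sum.cong refl) (auto simp: sum.delta')
  also have "\<dots> = (if l \<le> p \<and> k \<le> q then G (p - l) (q - k) else 0)"
    by (auto simp: sum.delta')
  finally show ?thesis .
qed

lemma bmul_hyp1F1_hyp2F1y_coeff:
  "bmul (hyp1F1 a d) (hyp2F1y b c e) p q
    = pochhammer a p / (pochhammer d p * fact p)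
      * (pochhammer b q * pochhammer c q / (pochhammer e q * fact q))"
proof -
  have "bmul (hyp1F1 a d) (hyp2F1y b c e) p q
      = (\<Sum>i\<le>p. \<Sum>j\<le>q. if i = p then (if j = 0 then hyp1F1 a d p 0 * hyp2F1y b c e 0 q else 0) else 0)"
    unfolding bmul_def by (intro sum.cong refl) (auto simp: hyp1F1_def hyp2F1y_def)
  also have "\<dots> = (\<Sum>i\<le>p. if i = p then hyp1F1 a d p 0 * hyp2F1y b c e 0 q else 0)"
    by (intro sum.cong refl) (auto simp: sum.delta')
  also have "\<dots> = hyp1F1 a d p 0 * hyp2F1y b c e 0 q"
    by (simp add: sum.delta')
  finally show ?thesis by (simp add: hyp1F1_def hyp2F1y_def)
qed

lemma bsummableI_finite_support:
  assumes "\<And>p q. finite (S p q)" and "\<And>p q i. i \<in> I \<Longrightarrow> i \<notin> S p q \<Longrightarrow> F i p q = 0"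
  shows "bsummable F I"
  unfolding bsummable_def
proof (intro allI)
  fix p q
  have "{i \<in> I. F i p q \<noteq> 0} \<subseteq> S p q" using assms(2) by blast
  then show "finite {i \<in> I. F i p q \<noteq> 0}" using assms(1) by (rule finite_subset)
qed

lemma bsum_eq_sum:
  assumes "finite S" "S \<subseteq> I" "\<And>i. i \<in> I \<Longrightarrow> i \<notin> S \<Longrightarrow> F i p q = 0"
  shows "bsum F I p q = (\<Sum>i\<in>S. F i p q)"
  unfolding bsum_def using assms by (intro sum.mono_neutral_left) auto

lemma add_of_int_in_Ints_iff: "(a::'a::ring_1) + of_int n \<in> \<int> \<longleftrightarrow> a \<in> \<int>"
  by (metis Ints_add Ints_diff Ints_of_int add_diff_cancel_right')

lemma not_Ints_imp_not_nonpos_Ints: "a \<notin> \<int> \<Longrightarrow> a \<notin> \<int>\<^sub>\<le>\<^sub>0"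
  using nonpos_Ints_subset_Ints by blast

lemma pochhammer_one_minus_neq_0:
  fixes a :: "'a::field_char_0"
  assumes "a \<notin> \<int>"
  shows "pochhammer (1 - a) n \<noteq> 0"
proof
  assume "pochhammer (1 - a) n = 0"
  then obtain j where "1 - a = - of_nat j" by (auto simp: pochhammer_eq_0_iff)
  then have "a = of_int (int j + 1)" by (simp add: algebra_simps)
  with assms show False by auto
qed

lemma poch_int_Gamma:
  assumes "a \<notin> \<int>"
  shows "poch_int a k = Gamma (a + of_int k) / Gamma a"
proof (cases "0 \<le> k")
  case True
  then show ?thesis
    using pochhammer_Gamma[of a "nat k"] not_Ints_imp_not_nonpos_Ints[OF assms]
    by (simp add: poch_int_def)
next
  case False
  have "a + of_int k \<notin> \<int>\<^sub>\<le>\<^sub>0"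
    using assms by (intro not_Ints_imp_not_nonpos_Ints) (simp add: add_of_int_in_Ints_iff)
  then have "pochhammer (a + of_int k) (nat (-k)) = Gamma a / Gamma (a + of_int k)"
    using False pochhammer_Gamma[of "a + of_int k" "nat (-k)"] by simp
  then show ?thesis using False by (simp add: poch_int_def)
qed

lemma poch_int_of_nat [simp]: "poch_int a (int n) = pochhammer a n"
  by (simp add: poch_int_def)

lemma poch_int_add:
  assumes "a \<notin> \<int>"
  shows "poch_int a (m + n) = poch_int a m * poch_int (a + of_int m) n"
proof -
  have "a + of_int m \<notin> \<int>" using assms by (simp add: add_of_int_in_Ints_iff)
  then have "Gamma (a + of_int m) \<noteq> 0"
    by (simp add: Gamma_eq_zero_iff not_Ints_imp_not_nonpos_Ints)
  then show ?thesis
    using \<open>a + of_int m \<notin> \<int>\<close> by (simp add: poch_int_Gamma assms add.assoc)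
qed

lemma pochhammer_shift_minus:
  "pochhammer (1 - a :: 'a::comm_ring_1) m = (-1) ^ m * pochhammer (a - of_nat m) (m::nat)"
  using pochhammer_minus[of "a - 1" m] by simp

lemma poch_int_shift_down:
  assumes "a \<notin> \<int>"
  shows "poch_int (a - of_nat m) (int m + n) = (-1) ^ m * pochhammer (1 - a) m * poch_int a n"
proof -
  have "a - of_nat m \<notin> \<int>"
    using assms add_of_int_in_Ints_iff[of a "- int m"] by simp
  then have "poch_int (a - of_nat m) (int m + n)
      = poch_int (a - of_nat m) (int m) * poch_int (a - of_nat m + of_int (int m)) n"
    by (rule poch_int_add)
  then have "poch_int (a - of_nat m) (int m + n) = pochhammer (a - of_nat m) m * poch_int a n"
    by simp
  then show ?thesis by (simp add: pochhammer_shift_minus)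
qed

lemma sum_choose_mult_choose:
  assumes "1 \<le> k"
  shows "(\<Sum>l\<in>{1..min k p}. ((k - 1) choose (l - 1)) * (p choose l)) = (p + k - 1) choose k"
proof -
  have "(p + k - 1) choose k = (\<Sum>l\<le>k. (p choose l) * ((k - 1) choose (k - l)))"
    using vandermonde[of p "k - 1" k] assms by simp
  also have "\<dots> = (\<Sum>l\<in>{1..min k p}. (p choose l) * ((k - 1) choose (k - l)))"
  proof (intro sum.mono_neutral_right)
    show "\<forall>l\<in>{..k} - {1..min k p}. (p choose l) * ((k - 1) choose (k - l)) = 0"
    proof
      fix l assume "l \<in> {..k} - {1..min k p}"
      then have "l = 0 \<or> p < l" by auto
      then show "(p choose l) * ((k - 1) choose (k - l)) = 0" using assms by auto
    qed
  qed auto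
  also have "\<dots> = (\<Sum>l\<in>{1..min k p}. ((k - 1) choose (l - 1)) * (p choose l))"
  proof (intro sum.cong refl)
    fix l assume l: "l \<in> {1..min k p}"
    then have "(k - 1) choose (l - 1) = (k - 1) choose (k - 1 - (l - 1))"
      by (intro binomial_symmetric) auto
    also have "k - 1 - (l - 1) = k - l" using l by auto
    finally have "(k - 1) choose (l - 1) = (k - 1) choose (k - l)" .
    then show "(p choose l) * ((k - 1) choose (k - l)) = ((k - 1) choose (l - 1)) * (p choose l)"
      by simp
  qed
  finally show ?thesis by simp
qed

lemma fact_ratio_eq_choose_mult_choose:
  assumes "1 \<le> l" "l \<le> k" "l \<le> p"
  shows "fact (k - 1) * fact p / (fact (l - 1) * fact l * fact (k - l) * fact (p - l))
     = (of_nat (((k - 1) choose (l - 1)) * (p choose l)) :: 'a::field_char_0)"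
proof -
  have "(of_nat ((k - 1) choose (l - 1)) :: 'a) = fact (k - 1) / (fact (l - 1) * fact (k - 1 - (l - 1)))"
    by (rule binomial_fact) (use assms in auto)
  also have "k - 1 - (l - 1) = k - l" using assms by auto
  finally have lower: "(of_nat ((k - 1) choose (l - 1)) :: 'a) = fact (k - 1) / (fact (l - 1) * fact (k - l))" .
  have upper: "(of_nat (p choose l) :: 'a) = fact p / (fact l * fact (p - l))"
    using binomial_fact[of l p] assms by simp
  show ?thesis unfolding of_nat_mult lower upper by (simp add: field_simps)
qed

lemma chu_vandermonde_pochhammer:
  fixes a :: "'a::field_char_0"
  assumes nz: "pochhammer (1 - a) q \<noteq> 0"
  shows "(\<Sum>k\<le>q. (-1) ^ (q - k) * of_nat ((p + k - 1) choose k) / (pochhammer (1 - a) k * fact (q - k)))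
       = pochhammer (a + of_int (int p - int q)) q / (pochhammer (1 - a) q * fact q)"
proof -
  have summand: "(-1) ^ (q - k) * of_nat ((p + k - 1) choose k) / (pochhammer (1 - a) k * fact (q - k))
      = (-1) ^ q * (((- of_nat p) gchoose k) * ((of_nat q - a) gchoose (q - k))) / pochhammer (1 - a) q"
    if k: "k \<le> q" for k
  proof -
    have lower: "of_nat ((p + k - 1) choose k) = (-1) ^ k * ((- of_nat p :: 'a) gchoose k)"
    proof (cases "p + k = 0")
      case False
      then have "of_nat (p + k - 1) = (of_nat (p + k) - of_nat 1 :: 'a)"
        by (subst of_nat_diff) auto
      then show ?thesis by (simp add: gbinomial_minus binomial_gbinomial flip: power_add)
    qed simp
    have upper: "(of_nat q - a) gchoose (q - k) = pochhammer (1 - a + of_nat k) (q - k) / fact (q - k)"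
      using k by (simp add: gbinomial_pochhammer' of_nat_diff algebra_simps)
    have split: "pochhammer (1 - a) q = pochhammer (1 - a) k * pochhammer (1 - a + of_nat k) (q - k)"
      using k by (rule pochhammer_product)
    have "pochhammer (1 - a) k \<noteq> 0" using nz k by (rule pochhammer_neq_0_mono)
    moreover have "(-1 :: 'a) ^ (q - k) * (-1) ^ k = (-1) ^ q"
      using k by (simp flip: power_add)
    ultimately show ?thesis
      using nz unfolding lower upper split by (simp add: field_simps)
  qed
  have "(\<Sum>k\<le>q. (-1) ^ (q - k) * of_nat ((p + k - 1) choose k) / (pochhammer (1 - a) k * fact (q - k)))
      = (\<Sum>k\<le>q. (-1) ^ q * (((- of_nat p) gchoose k) * ((of_nat q - a) gchoose (q - k))) / pochhammer (1 - a) q)"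
    by (intro sum.cong refl summand) simp
  also have "\<dots> = (-1) ^ q * (\<Sum>k=0..q. ((- of_nat p) gchoose k) * ((of_nat q - a) gchoose (q - k))) / pochhammer (1 - a) q"
    by (simp add: sum_divide_distrib sum_distrib_left atMost_atLeast0)
  also have "\<dots> = (-1) ^ q * ((- of_nat p + (of_nat q - a)) gchoose q) / pochhammer (1 - a) q"
    by (simp only: gbinomial_Vandermonde)
  also have "(- of_nat p + (of_nat q - a)) gchoose q = (-1) ^ q * pochhammer (a + of_int (int p - int q)) q / fact q"
    by (simp add: gbinomial_pochhammer algebra_simps)
  finally show ?thesis by (simp flip: power_add add: mult_2[symmetric])
qed

definition H11_expansion_term :: "complex \<Rightarrow> complex \<Rightarrow> complex \<Rightarrow> complex \<Rightarrow> nat \<times> nat \<Rightarrow> bser" where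
  "H11_expansion_term a b c d = (\<lambda>(k, l). bsmult
      ((-1) ^ (k - l) * fact (k - 1) / (fact (l - 1) * fact l * fact (k - l))
       * pochhammer b k * pochhammer c k
       / (pochhammer (1 - a) k * pochhammer (1 - a) (k - l) * pochhammer d l))
      (bmul (bmono l k)
        (bnegy (H11 (a - of_nat k + of_nat l) (b + of_nat k) (c + of_nat k) (d + of_nat l)))))"

lemma H11_expansion_term_eq_0:
  "\<not> (l \<le> p \<and> k \<le> q) \<Longrightarrow> H11_expansion_term a b c d (k, l) p q = 0"
  by (auto simp: H11_expansion_term_def bsmult_def bmul_bmono_coeff)

lemma H11_expansion_term_apply:
  assumes "l \<le> p" "k \<le> q"
  shows "H11_expansion_term a b c d (k, l) p q
    = (-1) ^ (k - l) * fact (k - 1) / (fact (l - 1) * fact l * fact (k - l))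
       * pochhammer b k * pochhammer c k
       / (pochhammer (1 - a) k * pochhammer (1 - a) (k - l) * pochhammer d l)
      * ((-1) ^ (q - k) * H11 (a - of_nat k + of_nat l) (b + of_nat k) (c + of_nat k) (d + of_nat l) (p - l) (q - k))"
  using assms by (simp add: H11_expansion_term_def bsmult_def bmul_bmono_coeff bnegy_def)

lemma H11_expansion_term_coeff:
  fixes a b c d :: complex
  assumes a: "a \<notin> \<int>" and d: "\<forall>n::nat. d \<noteq> - of_nat n"
    and kl: "1 \<le> l" "l \<le> k" "k \<le> q" "l \<le> p"
  shows "H11_expansion_term a b c d (k, l) p q
       = poch_int a (int p - int q) * pochhammer b q * pochhammer c q / (pochhammer d p * fact p)
         * ((-1) ^ (q - k) / (pochhammer (1 - a) k * fact (q - k)))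
         * of_nat (((k - 1) choose (l - 1)) * (p choose l))"
proof -
  have "a - of_nat k + of_nat l = a - of_nat (k - l)"
    and "int (p - l) - int (q - k) = int (k - l) + (int p - int q)"
    using kl by (simp_all add: of_nat_diff)
  with poch_int_shift_down[OF a]
  have shift: "poch_int (a - of_nat k + of_nat l) (int (p - l) - int (q - k))
      = (-1) ^ (k - l) * pochhammer (1 - a) (k - l) * poch_int a (int p - int q)"
    by (simp only:)
  have b: "pochhammer b q = pochhammer b k * pochhammer (b + of_nat k) (q - k)"
    and c: "pochhammer c q = pochhammer c k * pochhammer (c + of_nat k) (q - k)"
    and d': "pochhammer d p = pochhammer d l * pochhammer (d + of_nat l) (p - l)"
    using kl by (simp_all add: pochhammer_product)
  have "pochhammer d p \<noteq> 0" using d by (auto simp: pochhammer_eq_0_iff)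
  then have "pochhammer d l \<noteq> 0" "pochhammer (d + of_nat l) (p - l) \<noteq> 0"
    unfolding d' by auto
  moreover have "pochhammer (1 - a) k \<noteq> 0" "pochhammer (1 - a) (k - l) \<noteq> 0"
    using a by (simp_all add: pochhammer_one_minus_neq_0)
  moreover have "(-1 :: complex) ^ (k - l) * (-1) ^ (k - l) = 1"
    by (simp flip: power_add add: mult_2[symmetric])
  ultimately show ?thesis
    unfolding H11_expansion_term_apply[OF kl(4,3)] H11_def shift b c d'
      fact_ratio_eq_choose_mult_choose[symmetric, OF kl(1,2,4)]
    by (simp add: field_simps)
qed

lemma bsummable_H11_expansion_term:
  "bsummable (H11_expansion_term a b c d) {(k, l). 1 \<le> k \<and> 1 \<le> l \<and> l \<le> k}"
  by (rule bsummableI_finite_support[where S = "\<lambda>p q. Sigma {1..q} (\<lambda>k. {1..min k p})"])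
    (auto intro: H11_expansion_term_eq_0)

lemma bsum_H11_expansion_term:
  fixes a b c d :: complex
  assumes a: "a \<notin> \<int>" and d: "\<forall>n::nat. d \<noteq> - of_nat n"
  shows "bsum (H11_expansion_term a b c d) {(k, l). 1 \<le> k \<and> 1 \<le> l \<and> l \<le> k} p q
    = poch_int a (int p - int q) * pochhammer b q * pochhammer c q / (pochhammer d p * fact p)
      * (\<Sum>k\<in>{1..q}. (-1) ^ (q - k) * of_nat ((p + k - 1) choose k) / (pochhammer (1 - a) k * fact (q - k)))"
proof -
  define X where "X = poch_int a (int p - int q) * pochhammer b q * pochhammer c q / (pochhammer d p * fact p)"
  define w where "w k = (-1) ^ (q - k) / (pochhammer (1 - a) k * fact (q - k))" for k
  have "bsum (H11_expansion_term a b c d) {(k, l). 1 \<le> k \<and> 1 \<le> l \<and> l \<le> k} p q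
      = (\<Sum>i\<in>Sigma {1..q} (\<lambda>k. {1..min k p}). H11_expansion_term a b c d i p q)"
    by (rule bsum_eq_sum) (auto intro: H11_expansion_term_eq_0)
  also have "\<dots> = (\<Sum>k\<in>{1..q}. \<Sum>l\<in>{1..min k p}. H11_expansion_term a b c d (k, l) p q)"
    by (subst sum.Sigma) (auto simp: case_prod_beta)
  also have "\<dots> = (\<Sum>k\<in>{1..q}. \<Sum>l\<in>{1..min k p}. X * w k * of_nat (((k - 1) choose (l - 1)) * (p choose l)))"
    by (intro sum.cong refl) (simp add: H11_expansion_term_coeff[OF a d] X_def w_def)
  also have "\<dots> = (\<Sum>k\<in>{1..q}. X * w k * of_nat ((p + k - 1) choose k))"
  proof (intro sum.cong refl)
    fix k assume "k \<in> {1..q}"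
    then have "(\<Sum>l\<in>{1..min k p}. ((k - 1) choose (l - 1)) * (p choose l)) = (p + k - 1) choose k"
      by (intro sum_choose_mult_choose) simp
    then show "(\<Sum>l\<in>{1..min k p}. X * w k * of_nat (((k - 1) choose (l - 1)) * (p choose l)))
        = X * w k * of_nat ((p + k - 1) choose k)"
      by (metis of_nat_sum sum_distrib_left)
  qed
  finally show ?thesis unfolding sum_distrib_left by (simp add: X_def w_def mult_ac)
qed

theorem mainTheorem13:
  fixes a b c d :: complex
  assumes "a \<notin> \<int>" and "\<forall>n::nat. d \<noteq> - of_nat n"
  defines "T \<equiv> (\<lambda>(k, l). bsmult
              ((-1) ^ (k - l) * fact (k - 1) / (fact (l - 1) * fact l * fact (k - l))
               * pochhammer b k * pochhammer c k
               / (pochhammer (1 - a) k * pochhammer (1 - a) (k - l) * pochhammer d l))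
              (bmul (bmono l k)
                (bnegy (H11 (a - of_nat k + of_nat l) (b + of_nat k) (c + of_nat k) (d + of_nat l)))))"
      and "I \<equiv> {(k::nat, l::nat). 1 \<le> k \<and> 1 \<le> l \<and> l \<le> k}"
  shows "bsummable T I \<and>
         bmul (hyp1F1 a d) (hyp2F1y b c (1 - a)) = badd (bnegy (H11 a b c d)) (bsum T I)"
proof -
  have T: "T = H11_expansion_term a b c d"
    unfolding T_def H11_expansion_term_def ..
  have "bmul (hyp1F1 a d) (hyp2F1y b c (1 - a)) p q = badd (bnegy (H11 a b c d)) (bsum T I) p q" for p q
  proof -
    define X where "X = poch_int a (int p - int q) * pochhammer b q * pochhammer c q / (pochhammer d p * fact p)"
    define w where "w k = (-1) ^ (q - k) * of_nat ((p + k - 1) choose k) / (pochhammer (1 - a) k * fact (q - k))" for k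
    have "poch_int a (int p - int q) * pochhammer (a + of_int (int p - int q)) q = pochhammer a p"
      using poch_int_add[OF assms(1), of "int p - int q" "int q"] by simp
    then have "bmul (hyp1F1 a d) (hyp2F1y b c (1 - a)) p q = X * (\<Sum>k\<le>q. w k)"
      unfolding w_def chu_vandermonde_pochhammer[OF pochhammer_one_minus_neq_0[OF assms(1)]]
      by (simp add: bmul_hyp1F1_hyp2F1y_coeff X_def field_simps)
    also have "\<dots> = X * w 0 + X * (\<Sum>k\<in>{1..q}. w k)"
      by (simp add: atMost_atLeast0 sum.atLeast_Suc_atMost distrib_left)
    also have "\<dots> = badd (bnegy (H11 a b c d)) (bsum T I) p q"
      unfolding badd_def T I_def bsum_H11_expansion_term[OF assms(1,2)]
      by (simp add: X_def w_def bnegy_def H11_def)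
    finally show ?thesis .
  qed
  then show ?thesis
    using bsummable_H11_expansion_term by (auto simp: T I_def)
qed

end
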